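(* In the $\mathbf N$-agent system described in the context, let $\{\boldsymbol\mu_t^{\mathbf N},\boldsymbol\nu_t^{\mathbf N}\}_{t\ge0}$ be the empirical joint state and action distributions induced by a policy $\boldsymbol\pi=\{\boldsymbol\pi_t\}_{t\ge0}$. Then for every $t\ge0$, $$\mathbb E\big|\boldsymbol\nu_t^{\mathbf N}-\nu^{\mathrm{MF}}(\boldsymbol\mu_t^{\mathbf N},\boldsymbol\pi_t)\big|_1\le\frac1{N_{\mathrm{pop}}}\Big(\sum_{k\in[K]}\sqrt{N_k}\Big)\sqrt{|\mathcal U|}.$$
   Context: Fix $K\ge1$, $N_1,\dots,N_K\ge1$, $[K]=\{1,\dots,K\}$, $N_{\mathrm{pop}}=\sum_kN_k$, finite sets $\mathcal X,\mathcal U$, $\mathcal P(A)$ the probability distributions on $A$, $|\cdot|_1$ the $L_1$ norm. Agent $j\in[N_k]$ of class $k$ has state $x_{j,k}^t\in\mathcal X$ and action $u_{j,k}^t\in\mathcal U$; $\boldsymbol\mu_t^{\mathbf N}(x,k)=\frac1{N_{\mathrm{pop}}}\sum_{j=1}^{N_k}\mathbf 1(x_{j,k}^t=x)$, $\boldsymbol\nu_t^{\mathbf N}(u,k)=\frac1{N_{\mathrm{pop}}}\sum_{j=1}^{N_k}\mathbf 1(u_{j,k}^t=u)$. For each $k$, $P_k:\mathcal X\times\mathcal U\times\mathcal P(\mathcal X\times[K])\times\mathcal P(\mathcal U\times[K])\to\mathcal P(\mathcal X)$ is a transition law. A policy is $\boldsymbol\pi=\{\boldsymbol\pi_t\}_{t\ge0}$,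 $\boldsymbol\pi_t=(\pi_k^t)_k$, with $\pi_k^t:\mathcal X\times\mathcal P(\mathcal X\times[K])\to\mathcal P(\mathcal U)$. Dynamics: conditioned on all states at time $t$, actions are independent across agents with $u_{j,k}^t\sim\pi_k^t(x_{j,k}^t,\boldsymbol\mu_t^{\mathbf N})$; conditioned on all states and actions at time $t$, next states are independent with $x_{j,k}^{t+1}\sim P_k(x_{j,k}^t,u_{j,k}^t,\boldsymbol\mu_t^{\mathbf N},\boldsymbol\nu_t^{\mathbf N})$. For $\boldsymbol\mu\in\mathcal P(\mathcal X\times[K])$ and decision rules $(\pi_k)_k$: $\nu^{\mathrm{MF}}(\boldsymbol\mu,\boldsymbol\pi)(u,k)=\sum_x\pi_k(x,\boldsymbol\mu)(u)\boldsymbol\mu(x,k)$. *)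

theory Defs
  imports "HOL-Probability.Probability"
begin

(* A joint configuration of states is a function  nat \<times> nat \<Rightarrow> 'x  (values outside the
   agent set are irrelevant); likewise for actions. *)

definition agents :: "nat \<Rightarrow> (nat \<Rightarrow> nat) \<Rightarrow> (nat \<times> nat) set" where
  "agents K N = {(j,k). k \<in> {1..K} \<and> j \<in> {1..N k}}"

definition Npop :: "nat \<Rightarrow> (nat \<Rightarrow> nat) \<Rightarrow> nat" where
  "Npop K N = (\<Sum>k\<in>{1..K}. N k)"

definition emp_state :: "nat \<Rightarrow> (nat \<Rightarrow> nat) \<Rightarrow> (nat \<times> nat \<Rightarrow> 'x) \<Rightarrow> ('x \<times> nat \<Rightarrow> real)" where
  "emp_state K N s = (\<lambda>(x,k). (\<Sum>j\<in>{1..N k}. if s (j,k) = x then 1 else 0) / real (Npop K N))"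

definition emp_action :: "nat \<Rightarrow> (nat \<Rightarrow> nat) \<Rightarrow> (nat \<times> nat \<Rightarrow> 'u) \<Rightarrow> ('u \<times> nat \<Rightarrow> real)" where
  "emp_action K N a = (\<lambda>(u,k). (\<Sum>j\<in>{1..N k}. if a (j,k) = u then 1 else 0) / real (Npop K N))"

definition nu_MF :: "('x::finite \<times> nat \<Rightarrow> real) \<Rightarrow> (nat \<Rightarrow> 'x \<Rightarrow> ('x \<times> nat \<Rightarrow> real) \<Rightarrow> 'u pmf)
                      \<Rightarrow> ('u \<times> nat \<Rightarrow> real)" where
  "nu_MF mu rho = (\<lambda>(u,k). \<Sum>x\<in>UNIV. pmf (rho k x mu) u * mu (x,k))"

definition act_kernel ::
  "nat \<Rightarrow> (nat \<Rightarrow> nat) \<Rightarrow> (nat \<Rightarrow> nat \<Rightarrow> 'x \<Rightarrow> ('x \<times> nat \<Rightarrow> real) \<Rightarrow> 'u pmf)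
   \<Rightarrow> nat \<Rightarrow> (nat \<times> nat \<Rightarrow> 'x) \<Rightarrow> (nat \<times> nat \<Rightarrow> 'u) pmf" where
  "act_kernel K N pol t s =
     Pi_pmf (agents K N) undefined (\<lambda>(j,k). pol t k (s (j,k)) (emp_state K N s))"

definition next_kernel ::
  "nat \<Rightarrow> (nat \<Rightarrow> nat) \<Rightarrow> (nat \<Rightarrow> 'x \<Rightarrow> 'u \<Rightarrow> ('x \<times> nat \<Rightarrow> real) \<Rightarrow> ('u \<times> nat \<Rightarrow> real) \<Rightarrow> 'x pmf)
   \<Rightarrow> (nat \<times> nat \<Rightarrow> 'x) \<Rightarrow> (nat \<times> nat \<Rightarrow> 'u) \<Rightarrow> (nat \<times> nat \<Rightarrow> 'x) pmf" where
  "next_kernel K N P s a =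
     Pi_pmf (agents K N) undefined
       (\<lambda>(j,k). P k (s (j,k)) (a (j,k)) (emp_state K N s) (emp_action K N a))"

primrec sa_law ::
  "nat \<Rightarrow> (nat \<Rightarrow> nat) \<Rightarrow> (nat \<times> nat \<Rightarrow> 'x) pmf
   \<Rightarrow> (nat \<Rightarrow> nat \<Rightarrow> 'x \<Rightarrow> ('x \<times> nat \<Rightarrow> real) \<Rightarrow> 'u pmf)
   \<Rightarrow> (nat \<Rightarrow> 'x \<Rightarrow> 'u \<Rightarrow> ('x \<times> nat \<Rightarrow> real) \<Rightarrow> ('u \<times> nat \<Rightarrow> real) \<Rightarrow> 'x pmf)
   \<Rightarrow> nat \<Rightarrow> ((nat \<times> nat \<Rightarrow> 'x) \<times> (nat \<times> nat \<Rightarrow> 'u)) pmf" where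
  "sa_law K N init pol P 0 =
     bind_pmf init (\<lambda>s. map_pmf (Pair s) (act_kernel K N pol 0 s))"
| "sa_law K N init pol P (Suc t) =
     bind_pmf (sa_law K N init pol P t)
       (\<lambda>(s,a). bind_pmf (next_kernel K N P s a)
          (\<lambda>s'. map_pmf (Pair s') (act_kernel K N pol (Suc t) s')))"

definition L1_UK :: "nat \<Rightarrow> ('u::finite \<times> nat \<Rightarrow> real) \<Rightarrow> ('u \<times> nat \<Rightarrow> real) \<Rightarrow> real" where
  "L1_UK K f g = (\<Sum>(u,k)\<in>UNIV \<times> {1..K}. \<bar>f (u,k) - g (u,k)\<bar>)"

end

theory Submission
  imports Defs
begin

(* Fix the states. The actions are then independent, and for a class k and an action u the
   deviation Npop (nu^N - nu^MF)(u,k) is the sum over the N_k agents of class k of the centred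
   indicators 1{u_j = u} - pi(u | x_j). Its second moment is the sum of their variances, at most
   sum_j pi(u | x_j), and these add up to N_k over u. The pointwise bound |Y| <= (Y^2/c + c)/2
   with c = sqrt (N_k / |U|) then gives sum_u E|Y_u| <= sqrt (N_k |U|): it performs the Jensen
   step E|Y| <= sqrt (E Y^2) and the Cauchy-Schwarz step over u at once. A bound valid for every
   state configuration survives averaging over the law of the states at time t. *)

lemma finite_set_Pi_pmf:
  assumes "finite A" and "\<And>x. x \<in> A \<Longrightarrow> finite (set_pmf (p x))"
  shows "finite (set_pmf (Pi_pmf A d p))"
  using assms by (auto simp: set_Pi_pmf)

lemma expectation_Pi_pmf_component:
  fixes g :: "'a \<Rightarrow> real"
  assumes "finite A" and "x \<in> A"
  shows "measure_pmf.expectation (Pi_pmf A d p) (\<lambda>f. g (f x)) = measure_pmf.expectation (p x) g"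
proof -
  have "measure_pmf.expectation (Pi_pmf A d p) (\<lambda>f. g (f x))
          = measure_pmf.expectation (map_pmf (\<lambda>f. f x) (Pi_pmf A d p)) g"
    by simp
  also have "map_pmf (\<lambda>f. f x) (Pi_pmf A d p) = p x"
    using Pi_pmf_component[OF assms(1), of x d p] assms(2) by simp
  finally show ?thesis .
qed

lemma expectation_square_sum_Pi_pmf:
  fixes Z :: "'i \<Rightarrow> 'a \<Rightarrow> real"
  assumes A: "finite A" and fin: "\<And>x. x \<in> A \<Longrightarrow> finite (set_pmf (p x))"
    and "I \<subseteq> A"
    and centred: "\<And>x. x \<in> A \<Longrightarrow> measure_pmf.expectation (p x) (Z x) = 0"
  shows "measure_pmf.expectation (Pi_pmf A d p) (\<lambda>f. (\<Sum>x\<in>I. Z x (f x))\<^sup>2)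
       = (\<Sum>x\<in>I. measure_pmf.expectation (p x) (\<lambda>v. (Z x v)\<^sup>2))"
proof -
  let ?M = "Pi_pmf A d p"
  note prob = measure_pmf.prob_space_axioms[of ?M]
  have intg: "integrable (measure_pmf ?M) g" for g :: "_ \<Rightarrow> real"
    by (intro integrable_measure_pmf_finite finite_set_Pi_pmf A fin)
  have indep: "prob_space.indep_vars (measure_pmf ?M) (\<lambda>_. borel) (\<lambda>x f. Z x (f x)) A"
    by (rule prob_space.indep_vars_compose2[OF prob indep_vars_Pi_pmf[OF A]]) auto
  from \<open>I \<subseteq> A\<close> show ?thesis
  proof (induction I rule: infinite_finite_induct)
    case (infinite I)
    then show ?case using A finite_subset by blast
  next
    case empty
    then show ?case by simp
  next
    case (insert i I)
    let ?S = "\<lambda>f. \<Sum>x\<in>I. Z x (f x)"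
    have i: "i \<in> A" and "I \<subseteq> A" using insert.prems by auto
    have "prob_space.indep_var (measure_pmf ?M) borel (\<lambda>f. Z i (f i)) borel ?S"
      using insert.hyps \<open>I \<subseteq> A\<close> i
      by (intro prob_space.indep_vars_sum[OF prob])
         (auto intro: prob_space.indep_vars_subset[OF prob indep])
    then have cross: "measure_pmf.expectation ?M (\<lambda>f. Z i (f i) * ?S f) = 0"
      using prob_space.indep_var_lebesgue_integral[OF prob _ intg intg] centred[OF i]
        expectation_Pi_pmf_component[OF A i, where g = "Z i"] by simp
    have "(\<lambda>f. (\<Sum>x\<in>insert i I. Z x (f x))\<^sup>2) = (\<lambda>f. (Z i (f i))\<^sup>2 + 2 * (Z i (f i) * ?S f) + (?S f)\<^sup>2)"
      using insert.hyps by (simp add: power2_eq_square algebra_simps)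
    then have "measure_pmf.expectation ?M (\<lambda>f. (\<Sum>x\<in>insert i I. Z x (f x))\<^sup>2)
        = measure_pmf.expectation ?M (\<lambda>f. (Z i (f i))\<^sup>2) + measure_pmf.expectation ?M (\<lambda>f. (?S f)\<^sup>2)"
      using cross by (simp add: intg)
    then show ?case
      using insert expectation_Pi_pmf_component[OF A i, where g = "\<lambda>v. (Z i v)\<^sup>2"] \<open>I \<subseteq> A\<close> by simp
  qed
qed

lemma expectation_centred_indicator:
  "measure_pmf.expectation (q :: 'u::finite pmf) (\<lambda>v. indicator {u} v - pmf q u) = 0"
  by (simp add: measure_pmf_single integrable_measure_pmf_finite)

lemma expectation_square_centred_indicator_le:
  "measure_pmf.expectation (q :: 'u::finite pmf) (\<lambda>v. (indicator {u} v - pmf q u)\<^sup>2) \<le> pmf q u"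
proof -
  let ?r = "pmf q u"
  have "(\<lambda>v. (indicator {u} v - ?r)\<^sup>2) = (\<lambda>v. (1 - 2 * ?r) * indicator {u} v + ?r\<^sup>2)"
    by (auto simp: indicator_def power2_eq_square algebra_simps)
  then have "measure_pmf.expectation q (\<lambda>v. (indicator {u} v - ?r)\<^sup>2) = (1 - 2 * ?r) * ?r + ?r\<^sup>2"
    by (simp add: measure_pmf_single integrable_measure_pmf_finite)
  also have "\<dots> \<le> ?r"
    by (simp add: power2_eq_square algebra_simps)
  finally show ?thesis .
qed

lemma abs_le_AM_GM:
  fixes y c :: real
  assumes "c > 0"
  shows "\<bar>y\<bar> \<le> (y\<^sup>2 / c + c) / 2"
proof -
  have "0 \<le> (\<bar>y\<bar> - c)\<^sup>2" by simp
  then have "2 * c * \<bar>y\<bar> \<le> y\<^sup>2 + c\<^sup>2" by (simp add: power2_eq_square algebra_simps)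
  then show ?thesis using assms by (simp add: field_simps power2_eq_square)
qed

lemma sum_expectation_abs_count_deviation_Pi_pmf:
  fixes q :: "'i \<Rightarrow> 'u::finite pmf"
  assumes A: "finite A" and "B \<subseteq> A"
  shows "(\<Sum>u\<in>UNIV. measure_pmf.expectation (Pi_pmf A d q)
            (\<lambda>a. \<bar>\<Sum>x\<in>B. indicator {u} (a x) - pmf (q x) u\<bar>))
         \<le> sqrt (real (card B)) * sqrt (real CARD('u))"
proof (cases "B = {}")
  case False
  let ?M = "Pi_pmf A d q"
  let ?Y = "\<lambda>u a. \<Sum>x\<in>B. indicator {u} (a x) - pmf (q x) u"
  let ?m = "real (card B)" and ?C = "real CARD('u)"
  define c where "c = sqrt ?m / sqrt ?C"
  have "finite B" using A \<open>B \<subseteq> A\<close> finite_subset by blast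
  then have m: "?m > 0" using False by (simp add: card_gt_0_iff)
  then have c: "c > 0" unfolding c_def by simp
  have intg: "integrable (measure_pmf ?M) g" for g :: "_ \<Rightarrow> real"
    by (intro integrable_measure_pmf_finite finite_set_Pi_pmf A) simp
  have second_moment: "measure_pmf.expectation ?M (\<lambda>a. (?Y u a)\<^sup>2) \<le> (\<Sum>x\<in>B. pmf (q x) u)" for u
  proof -
    have "measure_pmf.expectation ?M (\<lambda>a. (?Y u a)\<^sup>2)
        = (\<Sum>x\<in>B. measure_pmf.expectation (q x) (\<lambda>v. (indicator {u} v - pmf (q x) u)\<^sup>2))"
      by (rule expectation_square_sum_Pi_pmf[OF A _ \<open>B \<subseteq> A\<close>])
         (simp_all add: expectation_centred_indicator)
    also have "\<dots> \<le> (\<Sum>x\<in>B. pmf (q x) u)"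
      by (intro sum_mono expectation_square_centred_indicator_le)
    finally show ?thesis .
  qed
  have first_moment: "measure_pmf.expectation ?M (\<lambda>a. \<bar>?Y u a\<bar>) \<le> ((\<Sum>x\<in>B. pmf (q x) u) / c + c) / 2" for u
  proof -
    have "measure_pmf.expectation ?M (\<lambda>a. \<bar>?Y u a\<bar>)
        \<le> measure_pmf.expectation ?M (\<lambda>a. ((?Y u a)\<^sup>2 / c + c) / 2)"
      by (intro integral_mono intg abs_le_AM_GM c)
    also have "\<dots> = (measure_pmf.expectation ?M (\<lambda>a. (?Y u a)\<^sup>2) / c + c) / 2"
      by (simp add: intg)
    also have "\<dots> \<le> ((\<Sum>x\<in>B. pmf (q x) u) / c + c) / 2"
      using second_moment[of u] c by (simp add: divide_right_mono)
    finally show ?thesis .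
  qed
  have "(\<Sum>u\<in>UNIV. measure_pmf.expectation ?M (\<lambda>a. \<bar>?Y u a\<bar>))
      \<le> (\<Sum>u\<in>UNIV. ((\<Sum>x\<in>B. pmf (q x) u) / c + c) / 2)"
    by (intro sum_mono first_moment)
  also have "\<dots> = ((\<Sum>x\<in>B. \<Sum>u\<in>UNIV. pmf (q x) u) / c + ?C * c) / 2"
    by (simp add: sum.distrib sum_divide_distrib[symmetric] sum.swap[of _ B] add_divide_distrib)
  also have "\<dots> = (?m / c + ?C * c) / 2"
    by (simp add: sum_pmf_eq_1)
  also have "\<dots> = sqrt ?m * sqrt ?C"
  proof -
    have "?m = sqrt ?m * sqrt ?m" "?C = sqrt ?C * sqrt ?C" by simp_all
    then show ?thesis using m by (simp add: c_def field_simps)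
  qed
  finally show ?thesis .
qed simp

lemma finite_agents: "finite (agents K N)"
proof -
  have "agents K N = (\<lambda>(k,j). (j,k)) ` (SIGMA k:{1..K}. {1..N k})"
    unfolding agents_def by force
  then show ?thesis by auto
qed

lemma emp_action_minus_nu_MF:
  fixes s :: "nat \<times> nat \<Rightarrow> 'x::finite"
  shows "emp_action K N a (u,k) - nu_MF (emp_state K N s) rho (u,k) =
     (\<Sum>j\<in>{1..N k}. indicator {u} (a (j,k)) - pmf (rho k (s (j,k)) (emp_state K N s)) u)
       / real (Npop K N)"
proof -
  let ?mu = "emp_state K N s"
  have "(\<Sum>x\<in>UNIV. pmf (rho k x ?mu) u * (\<Sum>j\<in>{1..N k}. if s (j,k) = x then 1 else 0))
      = (\<Sum>j\<in>{1..N k}. pmf (rho k (s (j,k)) ?mu) u)"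
    by (simp add: sum_distrib_left if_distrib cong: if_cong) (subst sum.swap, simp)
  then have "nu_MF ?mu rho (u,k) = (\<Sum>j\<in>{1..N k}. pmf (rho k (s (j,k)) ?mu) u) / real (Npop K N)"
    by (simp add: nu_MF_def emp_state_def sum_divide_distrib[symmetric])
  moreover have "emp_action K N a (u,k) = (\<Sum>j\<in>{1..N k}. indicator {u} (a (j,k))) / real (Npop K N)"
    by (simp add: emp_action_def indicator_def of_bool_def)
  ultimately show ?thesis
    by (simp only: sum_subtractf diff_divide_distrib)
qed

lemma expectation_L1_act_kernel_le:
  fixes pol :: "nat \<Rightarrow> nat \<Rightarrow> 'x::finite \<Rightarrow> ('x \<times> nat \<Rightarrow> real) \<Rightarrow> 'u::finite pmf"
  shows "measure_pmf.expectation (act_kernel K N pol t s)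
           (\<lambda>a. L1_UK K (emp_action K N a) (nu_MF (emp_state K N s) (pol t)))
         \<le> (\<Sum>k\<in>{1..K}. sqrt (real (N k))) * sqrt (real CARD('u)) / real (Npop K N)"
proof -
  let ?mu = "emp_state K N s"
  let ?A = "agents K N"
  define q where "q = (\<lambda>(j,k). pol t k (s (j,k)) ?mu)"
  define B where "B k = (\<lambda>j. (j,k)) ` {1..N k}" for k
  define Y where "Y k u a = \<bar>\<Sum>x\<in>B k. indicator {u} (a x) - pmf (q x) u\<bar>" for k u a
  have M: "act_kernel K N pol t s = Pi_pmf ?A undefined q"
    unfolding act_kernel_def q_def ..
  have B: "B k \<subseteq> ?A" "card (B k) = N k" if "k \<in> {1..K}" for k
    using that unfolding B_def agents_def by (auto simp: card_image inj_on_def)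
  have L1: "L1_UK K (emp_action K N a) (nu_MF ?mu (pol t))
      = (\<Sum>k\<in>{1..K}. \<Sum>u\<in>UNIV. Y k u a) / real (Npop K N)" for a
  proof -
    have "\<bar>emp_action K N a (u,k) - nu_MF ?mu (pol t) (u,k)\<bar> = Y k u a / real (Npop K N)" for u k
      unfolding emp_action_minus_nu_MF Y_def B_def
      by (simp add: sum.reindex inj_on_def q_def)
    then show ?thesis
      unfolding L1_UK_def
      by (simp add: sum.cartesian_product[symmetric] sum.swap[of _ UNIV] sum_divide_distrib)
  qed
  have intg: "integrable (measure_pmf (Pi_pmf ?A undefined q)) g" for g :: "_ \<Rightarrow> real"
    by (intro integrable_measure_pmf_finite finite_set_Pi_pmf finite_agents) simp
  have "measure_pmf.expectation (Pi_pmf ?A undefined q) (\<lambda>a. L1_UK K (emp_action K N a) (nu_MF ?mu (pol t)))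
      = (\<Sum>k\<in>{1..K}. \<Sum>u\<in>UNIV. measure_pmf.expectation (Pi_pmf ?A undefined q) (Y k u)) / real (Npop K N)"
    by (simp add: L1 intg)
  also have "\<dots> \<le> (\<Sum>k\<in>{1..K}. sqrt (real (N k)) * sqrt (real CARD('u))) / real (Npop K N)"
    unfolding Y_def
    using sum_expectation_abs_count_deviation_Pi_pmf[OF finite_agents B(1), of _ undefined q] B(2)
    by (intro divide_right_mono sum_mono) simp_all
  finally show ?thesis
    by (simp add: M sum_distrib_right)
qed

lemma expectation_bind_pmf_le:
  fixes g :: "'b \<Rightarrow> real"
  assumes "\<And>y. g y \<ge> 0"
    and "\<And>x. integrable (measure_pmf (F x)) g"
    and "\<And>x. measure_pmf.expectation (F x) g \<le> c"
  shows "measure_pmf.expectation (bind_pmf Q F) g \<le> c"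
proof -
  have "0 \<le> measure_pmf.expectation (F x) g" for x
    using assms(1) by (simp add: Bochner_Integration.integral_nonneg)
  then have "0 \<le> c"
    using assms(3) order_trans by blast
  have "(\<integral>\<^sup>+ y. g y \<partial>bind_pmf Q F) = (\<integral>\<^sup>+ x. \<integral>\<^sup>+ y. g y \<partial>F x \<partial>Q)"
    by simp
  also have "\<dots> \<le> (\<integral>\<^sup>+ x. c \<partial>Q)"
  proof (rule nn_integral_mono)
    fix x
    have "(\<integral>\<^sup>+ y. g y \<partial>F x) = measure_pmf.expectation (F x) g"
      using assms by (intro nn_integral_eq_integral) auto
    then show "(\<integral>\<^sup>+ y. g y \<partial>F x) \<le> c"
      using assms(3) by (simp add: ennreal_leI)
  qed
  finally have "(\<integral>\<^sup>+ y. g y \<partial>bind_pmf Q F) \<le> c"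
    by simp
  then show ?thesis
    using assms(1) \<open>0 \<le> c\<close>
    by (simp add: integral_eq_nn_integral enn2real_leI del: nn_integral_bind_pmf)
qed

lemma sa_law_eq_bind_act_kernel:
  "\<exists>Q. sa_law K N init pol P t = bind_pmf Q (\<lambda>s. map_pmf (Pair s) (act_kernel K N pol t s))"
proof (cases t)
  case (Suc t')
  then have "sa_law K N init pol P t =
     bind_pmf (bind_pmf (sa_law K N init pol P t') (\<lambda>(s,a). next_kernel K N P s a))
       (\<lambda>s'. map_pmf (Pair s') (act_kernel K N pol t s'))"
    by (simp add: bind_assoc_pmf case_prod_beta')
  then show ?thesis by blast
qed auto

theorem lemma6:
  fixes K :: nat and N :: "nat \<Rightarrow> nat"
    and init :: "(nat \<times> nat \<Rightarrow> 'x::finite) pmf"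
    and pol :: "nat \<Rightarrow> nat \<Rightarrow> 'x \<Rightarrow> ('x \<times> nat \<Rightarrow> real) \<Rightarrow> 'u::finite pmf"
    and P :: "nat \<Rightarrow> 'x \<Rightarrow> 'u \<Rightarrow> ('x \<times> nat \<Rightarrow> real) \<Rightarrow> ('u \<times> nat \<Rightarrow> real) \<Rightarrow> 'x pmf"
    and t :: nat
  assumes "K \<ge> 1"
    and "\<And>k. k \<in> {1..K} \<Longrightarrow> N k \<ge> 1"
  shows "measure_pmf.expectation (sa_law K N init pol P t)
           (\<lambda>(s,a). L1_UK K (emp_action K N a) (nu_MF (emp_state K N s) (pol t)))
         \<le> (\<Sum>k\<in>{1..K}. sqrt (real (N k))) * sqrt (real CARD('u)) / real (Npop K N)"
proof -
  obtain Q where Q: "sa_law K N init pol P t = bind_pmf Q (\<lambda>s. map_pmf (Pair s) (act_kernel K N pol t s))"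
    using sa_law_eq_bind_act_kernel by blast
  have "integrable (measure_pmf (act_kernel K N pol t s)) g" for s and g :: "_ \<Rightarrow> real"
    unfolding act_kernel_def
    by (intro integrable_measure_pmf_finite finite_set_Pi_pmf finite_agents) simp
  moreover have "0 \<le> L1_UK K f g" for f g :: "'u \<times> nat \<Rightarrow> real"
    by (simp add: L1_UK_def sum_nonneg)
  ultimately show ?thesis
    unfolding Q using expectation_L1_act_kernel_le[of K N pol t]
    by (intro expectation_bind_pmf_le) (simp_all add: split_beta)
qed

end
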